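(* Let $U\subseteq\mathbb{R}^d$ be equipped with the Euclidean ($\ell_2$) metric, fix $t\in\mathbb{R}^d$, and let $f:U\to V\subseteq\mathbb{R}$ be such that there is $f_0:\mathbb{R}_{\ge0}\to\mathbb{R}$ with $f(x)=f_0(\|x-t\|)$ for all $x\in U$. Let $g(x,x')=g_0(\|x-x'\|)$ be a smooth growth function. Let $x\ne t$ and suppose $(w^*,z^* )$ with $w^*\ne z^*$ satisfies $B^*(x)=\frac{|f(w^* )-f(z^* )|}{\|w^*-z^*\|\,g(x,z^* )}$. Then there is a pair $(w_L,z_L)$ of points on the line connecting $x$ and $t$ such that $\frac{|f(w_L)-f(z_L)|}{\|w_L-z_L\|\,g(x,z_L)}\ge B^*(x)$.
   Context: A smooth growth function is $g(x,x')=g_0(\|x-x'\|)$ with $g_0:\mathbb{R}_{\ge0}\to\mathbb{R}_{\ge1}$ monotonically increasing, $g_0(0)=1$, $g_0(r_1+r_2)\le g_0(r_1)g_0(r_2)$. $B^*(x)$ denotes the $g$-smooth sensitivity of $f$ at $x$, i.e. $\sup_z\frac{\mathrm{L}_{f,\Lambda}(z)}{g(x,z)}$, where $\mathrm{L}_{f,\Lambda}(z)$ is the infimum of $K$ with $|f(z)-f(w)|\le K\|z-w\|$ for all $w$ with $\|z-w\|\le\Lambda$; $f$ is understood to extend by the same formula $f_0(\|\cdot-t\|)$ to all of $\mathbb{R}^d$. *)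

theory Defs
  imports "HOL-Analysis.Analysis" "HOL-Library.Extended_Real"
begin

definition smooth_growth :: "(real \<Rightarrow> real) \<Rightarrow> bool" where
  "smooth_growth g0 \<longleftrightarrow>
     mono_on {0..} g0 \<and> (\<forall>r\<ge>0. g0 r \<ge> 1) \<and> g0 0 = 1 \<and>
     (\<forall>r1\<ge>0. \<forall>r2\<ge>0. g0 (r1 + r2) \<le> g0 r1 * g0 r2)"

definition growth :: "(real \<Rightarrow> real) \<Rightarrow> 'a::real_normed_vector \<Rightarrow> 'a \<Rightarrow> real" where
  "growth g0 x x' = g0 (norm (x - x'))"

definition local_lip :: "('a::real_normed_vector \<Rightarrow> real) \<Rightarrow> real \<Rightarrow> 'a \<Rightarrow> ereal" where
  "local_lip f \<Lambda> z = Inf {ereal K | K. \<forall>w. norm (z - w) \<le> \<Lambda> \<longrightarrow> \<bar>f z - f w\<bar> \<le> K * norm (z - w)}"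

definition smooth_sens :: "('a::real_normed_vector \<Rightarrow> real) \<Rightarrow> real \<Rightarrow> (real \<Rightarrow> real) \<Rightarrow> 'a \<Rightarrow> ereal" where
  "smooth_sens f \<Lambda> g0 x = (SUP z. local_lip f \<Lambda> z / ereal (growth g0 x z))"

end

theory Submission
  imports Defs
begin

text \<open>A radial function \<open>f0 (norm (y - t))\<close> takes the same values at two points \<open>w, z\<close> as at
  the points \<open>w', z'\<close> of the ray from \<open>t\<close> through \<open>x\<close> at the same distances from \<open>t\<close>. Moving
  them there can only shrink the denominator: \<open>norm (w' - z') = \<bar>norm (w - t) - norm (z - t)\<bar>\<close>
  and \<open>norm (x - z') = \<bar>norm (x - t) - norm (z - t)\<bar>\<close> are lower bounds for \<open>norm (w - z)\<close> and
  \<open>norm (x - z)\<close> by the reverse triangle inequality, and \<open>g0\<close> is monotone. If the two distances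
  coincide, the optimal value is \<open>0\<close> and any two distinct points of the line will do.\<close>

definition scaled_slope ::
    "('a::real_normed_vector \<Rightarrow> real) \<Rightarrow> (real \<Rightarrow> real) \<Rightarrow> 'a \<Rightarrow> 'a \<Rightarrow> 'a \<Rightarrow> real" where
  "scaled_slope f g0 x w z = \<bar>f w - f z\<bar> / (norm (w - z) * growth g0 x z)"

definition ray_point :: "'a::real_normed_vector \<Rightarrow> 'a \<Rightarrow> real \<Rightarrow> 'a" where
  "ray_point t x r = t + (r / norm (x - t)) *\<^sub>R (x - t)"

lemma growth_pos:
  assumes "smooth_growth g0"
  shows "growth g0 x z > 0"
proof -
  have "g0 (norm (x - z)) \<ge> 1"
    using assms unfolding smooth_growth_def by simp
  then show ?thesis
    unfolding growth_def by simp
qed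

lemma growth_mono:
  assumes "smooth_growth g0" and "norm (x - z) \<le> norm (x - z')"
  shows "growth g0 x z \<le> growth g0 x z'"
  using assms unfolding smooth_growth_def growth_def by (auto intro: mono_onD)

lemma ray_point_at_norm_diff [simp]:
  assumes "x \<noteq> t"
  shows "ray_point t x (norm (x - t)) = x"
  using assms unfolding ray_point_def by simp

lemma ray_point_on_line: "\<exists>u. ray_point t x r = x + u *\<^sub>R (t - x)"
proof
  show "ray_point t x r = x + (1 - r / norm (x - t)) *\<^sub>R (t - x)"
    unfolding ray_point_def by (simp add: algebra_simps)
qed

lemma norm_ray_point_diff_ray_point:
  assumes "x \<noteq> t"
  shows "norm (ray_point t x r - ray_point t x s) = \<bar>r - s\<bar>"
proof -
  have "ray_point t x r - ray_point t x s = ((r - s) / norm (x - t)) *\<^sub>R (x - t)"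
    unfolding ray_point_def by (simp add: algebra_simps diff_divide_distrib)
  then show ?thesis
    using assms by simp
qed

lemma norm_ray_point_diff:
  assumes "x \<noteq> t" and "r \<ge> 0"
  shows "norm (ray_point t x r - t) = r"
  using assms unfolding ray_point_def by simp

lemma scaled_slope_le_ray_points:
  fixes f0 g0 :: "real \<Rightarrow> real" and t x w z :: "'a::real_normed_vector"
  defines "f \<equiv> (\<lambda>y. f0 (norm (y - t)))"
  assumes "smooth_growth g0" and "x \<noteq> t" and "norm (w - t) \<noteq> norm (z - t)"
  shows "scaled_slope f g0 x w z
    \<le> scaled_slope f g0 x (ray_point t x (norm (w - t))) (ray_point t x (norm (z - t)))"
proof -
  define a b where "a = norm (w - t)" and "b = norm (z - t)"
  define w' z' where "w' = ray_point t x a" and "z' = ray_point t x b"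
  have f_eq: "f w' = f w" "f z' = f z"
    unfolding f_def w'_def z'_def a_def b_def using \<open>x \<noteq> t\<close> by (simp_all add: norm_ray_point_diff)
  have dist_w'z': "norm (w' - z') = \<bar>a - b\<bar>"
    unfolding w'_def z'_def using \<open>x \<noteq> t\<close> by (rule norm_ray_point_diff_ray_point)
  have "norm (w' - z') \<le> norm (w - z)"
    using norm_triangle_ineq3[of "w - t" "z - t"] unfolding dist_w'z' a_def b_def by simp
  moreover have "norm (w' - z') > 0"
    using assms(4) unfolding dist_w'z' a_def b_def by simp
  moreover have "growth g0 x z' \<le> growth g0 x z"
  proof (rule growth_mono[OF \<open>smooth_growth g0\<close>])
    have "norm (x - z') = \<bar>norm (x - t) - b\<bar>"
      using norm_ray_point_diff_ray_point[OF \<open>x \<noteq> t\<close>, of "norm (x - t)" b] \<open>x \<noteq> t\<close>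
      unfolding z'_def by simp
    then show "norm (x - z') \<le> norm (x - z)"
      using norm_triangle_ineq3[of "x - t" "z - t"] unfolding b_def by simp
  qed
  moreover have "growth g0 x z' > 0"
    using \<open>smooth_growth g0\<close> by (rule growth_pos)
  ultimately have "norm (w' - z') * growth g0 x z' \<le> norm (w - z) * growth g0 x z"
    and "norm (w' - z') * growth g0 x z' > 0"
    by (simp_all add: mult_mono)
  then show ?thesis
    unfolding scaled_slope_def f_eq a_def [symmetric] b_def [symmetric] w'_def [symmetric]
      z'_def [symmetric]
    by (simp add: frac_le)
qed

theorem mainTheorem12:
  fixes f0 :: "real \<Rightarrow> real" and g0 :: "real \<Rightarrow> real" and \<Lambda> :: real
    and t x wS zS :: "'a::euclidean_space"
  defines "f \<equiv> (\<lambda>y. f0 (norm (y - t)))"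
  assumes "\<Lambda> > 0"
    and "smooth_growth g0"
    and "x \<noteq> t"
    and "wS \<noteq> zS"
    and "smooth_sens f \<Lambda> g0 x =
           ereal (\<bar>f wS - f zS\<bar> / (norm (wS - zS) * growth g0 x zS))"
  shows "\<exists>wL zL. (\<exists>u. wL = x + u *\<^sub>R (t - x)) \<and> (\<exists>v. zL = x + v *\<^sub>R (t - x)) \<and> wL \<noteq> zL \<and>
           ereal (\<bar>f wL - f zL\<bar> / (norm (wL - zL) * growth g0 x zL)) \<ge> smooth_sens f \<Lambda> g0 x"
proof (cases "norm (wS - t) = norm (zS - t)")
  case True
  then have "smooth_sens f \<Lambda> g0 x = 0"
    using assms(6) unfolding f_def by simp
  moreover have "scaled_slope f g0 x x t \<ge> 0"
    unfolding scaled_slope_def using growth_pos[OF assms(3), of x t] by simp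
  ultimately have "ereal (scaled_slope f g0 x x t) \<ge> smooth_sens f \<Lambda> g0 x"
    by simp
  moreover have "\<exists>u. x = x + u *\<^sub>R (t - x)" and "\<exists>v. t = x + v *\<^sub>R (t - x)"
    by (rule exI[of _ 0], simp) (rule exI[of _ 1], simp)
  ultimately show ?thesis
    using \<open>x \<noteq> t\<close> unfolding scaled_slope_def by blast
next
  case False
  define wL zL where "wL = ray_point t x (norm (wS - t))" and "zL = ray_point t x (norm (zS - t))"
  have "norm (wL - zL) \<noteq> 0"
    using False norm_ray_point_diff_ray_point[OF \<open>x \<noteq> t\<close>] unfolding wL_def zL_def by simp
  then have "wL \<noteq> zL"
    by auto
  moreover have "\<exists>u. wL = x + u *\<^sub>R (t - x)" and "\<exists>v. zL = x + v *\<^sub>R (t - x)"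
    unfolding wL_def zL_def by (rule ray_point_on_line)+
  moreover have "scaled_slope f g0 x wS zS \<le> scaled_slope f g0 x wL zL"
    unfolding f_def wL_def zL_def using assms(3,4) False by (rule scaled_slope_le_ray_points)
  then have "ereal (scaled_slope f g0 x wL zL) \<ge> smooth_sens f \<Lambda> g0 x"
    using assms(6) unfolding scaled_slope_def by simp
  ultimately show ?thesis
    unfolding scaled_slope_def by blast
qed

end
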